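(* In the setting described in the context, if conditions (E), (M) and (T) hold, then $\frac{\sup_\Omega X}{\log\epsilon_N^{-1}}\to\gamma_*$ in probability under $\mathbb P_N$ as $N\to\infty$.
   Context: $\Omega\subset\mathbb R^d$ is a bounded, simply connected open set with smooth boundary; $|\cdot|$ is Lebesgue measure; $\gamma_*=\sqrt{2d}$. For each $N$, $\mathbb P_N$ (expectation $\mathbb E_N$) is a probability measure under which the canonical process $X$ is a random function on $\Omega$ that is integrable, bounded above, upper semicontinuous, and approximates a Gaussian log-correlated field on $\Omega$ (for each $f\in C_c^\infty(\Omega)$ the law of $\int fX$ converges to that of the Gaussian field with covariance $\log|x-y|^{-1}+g(x,y)$, $g$ continuous, bounded above, $L^2$). For $\gamma>0$, $\mu_N^\gamma(dx)=\frac{e^{\gamma X(x)}}{\mathbb E_N[e^{\gamma X(x)}]}dx$; $\mathscr T_N^\alpha=\{x\in\Omega:X(x)\ge\alpha\log\epsilon_N^{-1}\}$. Condition (E): there is $\epsilon_N>0$, $\epsilon_N\to0$, such that for every $\gamma>0$ there is $R_\gamma$ with $\mathbb E_N[e^{\gamma X(x)}]\le R_\gamma\epsilon_N^{-\gamma^2/2}$ for all $x\in\Omega$, and for every compact $A\subset\Omega$ a $C_{\gamma,A}$ with $\mathbb E_N[e^{\gamma X(x)}]\ge C_{\gamma,A}^{-1}\epsilon_N^{-\gamma^2/2}$ on $A$. Condition (M): for any $\gamma<\gamma_*$ and Borel $A\subseteq\Omega$ with $|A|>0$, $\mu_N^\gamma(A)$ converges in distribution to $\zeta_A^\gamma$ with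 $\mathbb P[0<\zeta_A^\gamma<\infty]=1$. Condition (T): for any $\alpha>\gamma_*$, $\mathbb P_N[\mathscr T_N^\alpha\ne\emptyset]\to0$. *)

theory Defs
  imports "HOL-Analysis.Analysis" "HOL-Probability.Probability"
begin

text \<open>C-infinity on an open set: every iterated partial derivative exists
  (the family F is closed under taking partial derivatives along the basis).\<close>
definition smooth_on :: "('a::euclidean_space \<Rightarrow> real) \<Rightarrow> 'a set \<Rightarrow> bool" where
  "smooth_on f U \<longleftrightarrow>
     (\<exists>F. f \<in> F \<and> (\<forall>g\<in>F. g differentiable_on U \<and>
        (\<forall>i\<in>Basis. (\<lambda>x. frechet_derivative g (at x) i) \<in> F)))"

definition smooth_boundary :: "'a::euclidean_space set \<Rightarrow> bool" where
  "smooth_boundary \<Omega> \<longleftrightarrow>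
     (\<forall>p\<in>frontier \<Omega>. \<exists>r>0. \<exists>\<phi>. smooth_on \<phi> (ball p r) \<and>
        frechet_derivative \<phi> (at p) \<noteq> (\<lambda>v. 0) \<and>
        \<Omega> \<inter> ball p r = {x\<in>ball p r. \<phi> x < 0})"

definition upper_semicontinuous_on :: "'a::topological_space set \<Rightarrow> ('a \<Rightarrow> real) \<Rightarrow> bool" where
  "upper_semicontinuous_on S f \<longleftrightarrow> (\<forall>t. openin (top_of_set S) {x\<in>S. f x < t})"

definition gaussian_law :: "real \<Rightarrow> real measure" where
  "gaussian_law v = (if v = 0 then return borel 0 else density lborel (normal_density 0 (sqrt v)))"

definition gmc :: "(nat \<Rightarrow> 'w measure) \<Rightarrow> (nat \<Rightarrow> 'w \<Rightarrow> 'a::euclidean_space \<Rightarrow> real)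
    \<Rightarrow> nat \<Rightarrow> real \<Rightarrow> 'a set \<Rightarrow> 'w \<Rightarrow> real" where
  "gmc M X N \<gamma> A \<omega> =
     (LINT x:A|lborel. exp (\<gamma> * X N \<omega> x) / (\<integral>\<omega>'. exp (\<gamma> * X N \<omega>' x) \<partial>M N))"

definition thick_points :: "(nat \<Rightarrow> 'w \<Rightarrow> 'a \<Rightarrow> real) \<Rightarrow> (nat \<Rightarrow> real) \<Rightarrow> 'a set
    \<Rightarrow> nat \<Rightarrow> real \<Rightarrow> 'w \<Rightarrow> 'a set" where
  "thick_points X \<epsilon> \<Omega> N \<alpha> \<omega> = {x\<in>\<Omega>. X N \<omega> x \<ge> \<alpha> * ln (1 / \<epsilon> N)}"

text \<open>(Outer) probability of the events E N tends to 0: they are covered by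
  measurable events whose probabilities tend to 0 (equivalent to
  P_N(E N) -> 0 when the events are measurable).\<close>
definition outer_prob_to_zero :: "(nat \<Rightarrow> 'w measure) \<Rightarrow> (nat \<Rightarrow> 'w set) \<Rightarrow> bool" where
  "outer_prob_to_zero M E \<longleftrightarrow>
     (\<exists>B. (\<forall>N. B N \<in> sets (M N) \<and> E N \<subseteq> B N) \<and> (\<lambda>N. measure (M N) (B N)) \<longlonglongrightarrow> 0)"

end

theory Submission
  imports Defs
begin

text \<open>Let \<open>L = ln (1 / \<epsilon>\<^sub>N)\<close>. The supremum exceeds \<open>(\<gamma>\<^sub>* + \<delta>) L\<close> only if there are
  thick points of that level, which is unlikely by (T). If instead \<open>X \<le> (\<gamma>\<^sub>* - \<delta>) L\<close> on
  \<open>\<Omega>\<close>, fix a ball \<open>A \<subseteq> \<Omega>\<close> and exponents \<open>\<gamma>\<^sub>* - \<delta> < \<gamma>\<^sub>1 < \<gamma>\<^sub>2 < \<gamma>\<^sub>*\<close>. Since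
  \<open>exp (\<gamma>\<^sub>2 X) = exp (\<gamma>\<^sub>1 X) exp ((\<gamma>\<^sub>2 - \<gamma>\<^sub>1) X)\<close>, the normalisations of (E) give
  \<open>m\<^sub>2 \<le> C \<epsilon>\<^sub>N\<^sup>e m\<^sub>1\<close> for the masses \<open>m\<^sub>i = \<mu>\<^sub>N\<^sup>\<gamma>(A)\<close> at \<open>\<gamma> = \<gamma>\<^sub>i\<close>, where
  \<open>e = (\<gamma>\<^sub>2\<^sup>2 - \<gamma>\<^sub>1\<^sup>2) / 2 - (\<gamma>\<^sub>2 - \<gamma>\<^sub>1) (\<gamma>\<^sub>* - \<delta>) > 0\<close>. By (M), \<open>m\<^sub>1\<close> is tight while
  \<open>m\<^sub>2\<close> stays away from 0 in probability, so this event is unlikely too. The events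
  need not be measurable, so their probabilities are outer probabilities, controlled
  through measurable hulls.\<close>

lemma (in finite_measure) exists_measurable_hull:
  assumes "E \<subseteq> space M"
  shows "\<exists>B\<in>sets M. E \<subseteq> B \<and> (\<forall>S\<in>sets M. E \<subseteq> S \<longrightarrow> measure M B \<le> measure M S)"
proof -
  define m where "m = (INF S\<in>{S\<in>sets M. E \<subseteq> S}. measure M S)"
  have covers_ne: "{S\<in>sets M. E \<subseteq> S} \<noteq> {}"
    using assms by auto
  have bdd: "bdd_below (measure M ` {S\<in>sets M. E \<subseteq> S})"
    by (intro bdd_belowI[of _ 0]) auto
  have "\<exists>S. S \<in> sets M \<and> E \<subseteq> S \<and> measure M S < m + 1 / Suc k" for k :: nat
    using cINF_less_iff[OF covers_ne bdd, of "m + 1 / Suc k"] unfolding m_def by auto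
  then obtain S where S: "\<And>k. S k \<in> sets M" "\<And>k. E \<subseteq> S k"
      "\<And>k. measure M (S k) < m + 1 / Suc k"
    by metis
  show ?thesis
  proof (intro bexI conjI ballI impI)
    show "(\<Inter>k. S k) \<in> sets M" and "E \<subseteq> (\<Inter>k. S k)"
      using S by auto
    have "measure M (\<Inter>k. S k) \<le> m"
    proof (rule field_le_epsilon)
      fix e :: real assume "0 < e"
      then obtain k :: nat where k: "inverse (Suc k) < e"
        using reals_Archimedean by blast
      have "measure M (\<Inter>k. S k) \<le> measure M (S k)"
        using S(1) by (intro finite_measure_mono) auto
      with S(3)[of k] k show "measure M (\<Inter>k. S k) \<le> m + e"
        by (simp add: inverse_eq_divide)
    qed
    moreover have "m \<le> measure M T" if "T \<in> sets M" "E \<subseteq> T" for T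
      unfolding m_def using that bdd by (intro cINF_lower) auto
    ultimately show "measure M (\<Inter>k. S k) \<le> measure M T" if "T \<in> sets M" "E \<subseteq> T" for T
      using that by fastforce
  qed
qed

lemma outer_prob_to_zeroI:
  assumes fin: "\<And>N. finite_measure (M N)" and E: "\<And>N. E N \<subseteq> space (M N)"
    and small_covers: "\<And>\<eta>. \<eta> > 0 \<Longrightarrow> \<exists>B. (\<forall>N. B N \<in> sets (M N)) \<and>
       (\<forall>\<^sub>F N in sequentially. E N \<subseteq> B N \<and> measure (M N) (B N) < \<eta>)"
  shows "outer_prob_to_zero M E"
proof -
  obtain H where H: "\<And>N. H N \<in> sets (M N)" "\<And>N. E N \<subseteq> H N"
    "\<And>N S. S \<in> sets (M N) \<Longrightarrow> E N \<subseteq> S \<Longrightarrow> measure (M N) (H N) \<le> measure (M N) S"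
    using finite_measure.exists_measurable_hull[OF fin E] by metis
  have "(\<lambda>N. measure (M N) (H N)) \<longlonglongrightarrow> 0"
  proof (rule order_tendstoI)
    show "\<forall>\<^sub>F N in sequentially. a < measure (M N) (H N)" if "a < 0" for a :: real
      using that by (intro always_eventually allI less_le_trans[OF _ measure_nonneg])
  next
    fix \<eta> :: real assume "0 < \<eta>"
    then obtain B where B: "\<And>N. B N \<in> sets (M N)"
      and "\<forall>\<^sub>F N in sequentially. E N \<subseteq> B N \<and> measure (M N) (B N) < \<eta>"
      using small_covers by blast
    from this(2) show "\<forall>\<^sub>F N in sequentially. measure (M N) (H N) < \<eta>"
      by eventually_elim (metis H(3)[OF B] le_less_trans)
  qed
  with H show ?thesis
    unfolding outer_prob_to_zero_def by blast
qed

lemma outer_prob_to_zero_mono: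
  assumes fin: "\<And>N. finite_measure (M N)" and E: "\<And>N. E N \<subseteq> space (M N)"
    and F: "outer_prob_to_zero M F" and sub: "\<forall>\<^sub>F N in sequentially. E N \<subseteq> F N"
  shows "outer_prob_to_zero M E"
proof (rule outer_prob_to_zeroI[OF fin E])
  obtain B where B: "\<And>N. B N \<in> sets (M N)" "\<And>N. F N \<subseteq> B N"
      "(\<lambda>N. measure (M N) (B N)) \<longlonglongrightarrow> 0"
    using F unfolding outer_prob_to_zero_def by blast
  fix \<eta> :: real assume "\<eta> > 0"
  with B(3) have "\<forall>\<^sub>F N in sequentially. measure (M N) (B N) < \<eta>"
    by (rule order_tendstoD)
  with sub have "\<forall>\<^sub>F N in sequentially. E N \<subseteq> B N \<and> measure (M N) (B N) < \<eta>"
    by eventually_elim (use B(2) in blast)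
  with B(1) show "\<exists>B. (\<forall>N. B N \<in> sets (M N)) \<and>
      (\<forall>\<^sub>F N in sequentially. E N \<subseteq> B N \<and> measure (M N) (B N) < \<eta>)"
    by blast
qed

lemma outer_prob_to_zero_Un:
  assumes "outer_prob_to_zero M E" "outer_prob_to_zero M F"
  shows "outer_prob_to_zero M (\<lambda>N. E N \<union> F N)"
proof -
  obtain B where B: "\<And>N. B N \<in> sets (M N)" "\<And>N. E N \<subseteq> B N"
      "(\<lambda>N. measure (M N) (B N)) \<longlonglongrightarrow> 0"
    using assms(1) unfolding outer_prob_to_zero_def by blast
  obtain C where C: "\<And>N. C N \<in> sets (M N)" "\<And>N. F N \<subseteq> C N"
      "(\<lambda>N. measure (M N) (C N)) \<longlonglongrightarrow> 0"
    using assms(2) unfolding outer_prob_to_zero_def by blast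
  have "(\<lambda>N. measure (M N) (B N) + measure (M N) (C N)) \<longlonglongrightarrow> 0"
    using tendsto_add[OF B(3) C(3)] by simp
  then have "(\<lambda>N. measure (M N) (B N \<union> C N)) \<longlonglongrightarrow> 0"
    by (rule real_tendsto_sandwich[rotated 2, OF tendsto_const])
      (use B(1) C(1) in \<open>auto intro!: always_eventually measure_Un_le\<close>)
  moreover have "E N \<union> F N \<subseteq> B N \<union> C N" for N
    using B(2) C(2) by blast
  moreover have "B N \<union> C N \<in> sets (M N)" for N
    using B(1) C(1) by (rule sets.Un)
  ultimately show ?thesis
    unfolding outer_prob_to_zero_def by (intro exI[of _ "\<lambda>N. B N \<union> C N"]) simp
qed

lemma weak_conv_eventually_prob_lt:
  assumes prob: "\<And>N. prob_space (M N)" and Y: "\<And>N. Y N \<in> borel_measurable (M N)"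
    and \<zeta>: "real_distribution \<zeta>" and conv: "weak_conv_m (\<lambda>N. distr (M N) borel (Y N)) \<zeta>"
    and f_cont: "\<And>x. isCont f x" and f_ge: "\<And>x. indicator S x \<le> f x" and f_le: "\<And>x. f x \<le> 1"
    and S: "S \<in> sets borel" and f_int: "integral\<^sup>L \<zeta> f < \<eta>"
  shows "\<forall>\<^sub>F N in sequentially. measure (M N) {\<omega>\<in>space (M N). Y N \<omega> \<in> S} < \<eta>"
proof -
  have distr: "real_distribution (distr (M N) borel (Y N))" for N
    using prob_space.real_distribution_distr[OF prob Y] by simp
  have f_nonneg: "0 \<le> f x" for x
    using order_trans[OF _ f_ge] by simp
  have "(\<lambda>N. integral\<^sup>L (distr (M N) borel (Y N)) f) \<longlonglongrightarrow> integral\<^sup>L \<zeta> f"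
    using f_nonneg f_le
    by (intro weak_conv_imp_integral_bdd_continuous_conv[OF distr \<zeta> conv f_cont, of 1]) auto
  from order_tendstoD(2)[OF this f_int]
  have "\<forall>\<^sub>F N in sequentially. integral\<^sup>L (distr (M N) borel (Y N)) f < \<eta>" .
  then show ?thesis
  proof eventually_elim
    case (elim N)
    interpret D: real_distribution "distr (M N) borel (Y N)" by (rule distr)
    have f_meas: "f \<in> borel_measurable borel"
      using f_cont by (intro borel_measurable_continuous_onI continuous_at_imp_continuous_on) auto
    have "measure (M N) {\<omega>\<in>space (M N). Y N \<omega> \<in> S} = measure (distr (M N) borel (Y N)) S"
      using Y S by (subst measure_distr) (auto simp: vimage_def Int_def conj_commute)
    also have "\<dots> = integral\<^sup>L (distr (M N) borel (Y N)) (indicator S)"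
      by simp
    also have "\<dots> \<le> integral\<^sup>L (distr (M N) borel (Y N)) f"
      using S f_meas f_ge f_nonneg f_le
      by (intro integral_mono D.integrable_const_bound[where B=1]) (auto simp: indicator_def)
    finally show ?case
      using elim by linarith
  qed
qed

lemma weak_conv_eventually_prob_le_small:
  assumes prob: "\<And>N. prob_space (M N)" and Y: "\<And>N. Y N \<in> borel_measurable (M N)"
    and \<zeta>: "real_distribution \<zeta>" and conv: "weak_conv_m (\<lambda>N. distr (M N) borel (Y N)) \<zeta>"
    and pos: "measure \<zeta> {0<..} = 1" and "\<eta> > 0"
  shows "\<exists>t>0. \<forall>\<^sub>F N in sequentially. measure (M N) {\<omega>\<in>space (M N). Y N \<omega> \<le> t} < \<eta>"
proof -
  interpret Z: real_distribution \<zeta> by (rule \<zeta>)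
  have "{..0::real} = space \<zeta> - {0<..}"
    by auto
  then have "cdf \<zeta> 0 = measure \<zeta> (space \<zeta> - {0<..})"
    by (simp add: cdf_def)
  also have "\<dots> = 0"
    using pos by (subst Z.prob_compl) auto
  finally have "cdf \<zeta> 0 = 0" .
  moreover have "(cdf \<zeta> \<longlongrightarrow> cdf \<zeta> 0) (at_right 0)"
    using Z.cdf_is_right_cont[of 0] by (simp add: continuous_within)
  ultimately have "\<forall>\<^sub>F x in at_right 0. cdf \<zeta> x < \<eta>"
    using \<open>\<eta> > 0\<close> order_tendstoD(2) by fastforce
  then obtain b where "b > 0" and b: "\<And>y. 0 < y \<Longrightarrow> y < b \<Longrightarrow> cdf \<zeta> y < \<eta>"
    unfolding eventually_at_right_field by blast
  define t where "t = b / 4"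
  have t: "t > 0" "cdf \<zeta> (2 * t) < \<eta>"
    using \<open>b > 0\<close> b[of "2 * t"] unfolding t_def by auto
  define f where "f y = min 1 (max 0 (2 - y / t))" for y
  have f_cont: "isCont f x" for x
    unfolding f_def using t(1) by (intro continuous_intros) auto
  have "integral\<^sup>L \<zeta> f \<le> integral\<^sup>L \<zeta> (indicator {..2 * t})"
  proof (intro integral_mono Z.integrable_const_bound[where B=1])
    show "f \<in> borel_measurable \<zeta>"
      using f_cont by (intro Z.measurable_finite_borel borel_measurable_continuous_onI
          continuous_at_imp_continuous_on) auto
    show "f x \<le> indicator {..2 * t} x" for x
      using t by (auto simp: f_def indicator_def field_simps)
  qed (auto simp: f_def indicator_def)
  also have "\<dots> = cdf \<zeta> (2 * t)"
    by (simp add: cdf_def)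
  finally have "integral\<^sup>L \<zeta> f < \<eta>"
    using t by linarith
  then have "\<forall>\<^sub>F N in sequentially. measure (M N) {\<omega>\<in>space (M N). Y N \<omega> \<in> {..t}} < \<eta>"
    by (intro weak_conv_eventually_prob_lt[OF prob Y \<zeta> conv f_cont])
      (use t in \<open>auto simp: f_def field_simps indicator_def\<close>)
  with t(1) show ?thesis
    by auto
qed

lemma weak_conv_eventually_prob_ge_small:
  assumes prob: "\<And>N. prob_space (M N)" and Y: "\<And>N. Y N \<in> borel_measurable (M N)"
    and \<zeta>: "real_distribution \<zeta>" and conv: "weak_conv_m (\<lambda>N. distr (M N) borel (Y N)) \<zeta>"
    and "\<eta> > 0"
  shows "\<exists>s. \<forall>\<^sub>F N in sequentially. measure (M N) {\<omega>\<in>space (M N). s \<le> Y N \<omega>} < \<eta>"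
proof -
  interpret Z: real_distribution \<zeta> by (rule \<zeta>)
  have "\<forall>\<^sub>F x in at_top. cdf \<zeta> x > 1 - \<eta>"
    using Z.cdf_lim_at_top_prob \<open>\<eta> > 0\<close> order_tendstoD(1) by fastforce
  then obtain a where a: "cdf \<zeta> a > 1 - \<eta>"
    unfolding eventually_at_top_linorder by auto
  define f where "f y = min 1 (max 0 (y - a))" for y
  have f_cont: "isCont f x" for x
    unfolding f_def by (intro continuous_intros)
  have "integral\<^sup>L \<zeta> f \<le> integral\<^sup>L \<zeta> (indicator {a<..})"
  proof (intro integral_mono Z.integrable_const_bound[where B=1])
    show "f \<in> borel_measurable \<zeta>"
      using f_cont by (intro Z.measurable_finite_borel borel_measurable_continuous_onI
          continuous_at_imp_continuous_on) auto
    show "f x \<le> indicator {a<..} x" for x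
      by (auto simp: f_def indicator_def)
  qed (auto simp: f_def indicator_def)
  also have "\<dots> = measure \<zeta> {a<..}"
    by simp
  also have "{a<..} = space \<zeta> - {..a}"
    by auto
  also have "measure \<zeta> \<dots> = 1 - cdf \<zeta> a"
    by (subst Z.prob_compl) (auto simp: cdf_def)
  finally have "integral\<^sup>L \<zeta> f < \<eta>"
    using a by linarith
  then have "\<forall>\<^sub>F N in sequentially. measure (M N) {\<omega>\<in>space (M N). Y N \<omega> \<in> {a + 1..}} < \<eta>"
    by (intro weak_conv_eventually_prob_lt[OF prob Y \<zeta> conv f_cont])
      (auto simp: f_def indicator_def)
  then show ?thesis
    by auto
qed

lemma exp_tilt_ratio_le:
  fixes y u d1 d2 h c \<gamma>1 \<gamma>2 :: real
  assumes "\<gamma>1 \<le> \<gamma>2" "y \<le> u" "0 < d1" "d1 \<le> h" "0 < c" "c \<le> d2"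
  shows "exp (\<gamma>2 * y) / d2 \<le> h / c * exp ((\<gamma>2 - \<gamma>1) * u) * (exp (\<gamma>1 * y) / d1)"
proof -
  have "exp (\<gamma>2 * y) / d2 \<le> exp (\<gamma>2 * y) / c"
    using assms(5,6) by (intro divide_left_mono) auto
  also have "\<dots> = exp (\<gamma>1 * y) * exp ((\<gamma>2 - \<gamma>1) * y) / c"
    by (simp add: algebra_simps flip: exp_add)
  also have "\<dots> \<le> exp (\<gamma>1 * y) * exp ((\<gamma>2 - \<gamma>1) * u) / c"
    using assms(1,2,5) by (intro divide_right_mono mult_left_mono) (auto intro: mult_left_mono)
  also have "\<dots> = exp (\<gamma>1 * y) / d1 * d1 * exp ((\<gamma>2 - \<gamma>1) * u) / c"
    using assms(3) by simp
  also have "\<dots> \<le> exp (\<gamma>1 * y) / d1 * h * exp ((\<gamma>2 - \<gamma>1) * u) / c"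
    using assms(3-5) by (intro divide_right_mono mult_right_mono mult_left_mono) auto
  finally show ?thesis
    by (simp add: field_simps)
qed

lemma borel_measurable_exp_moment:
  fixes Z :: "'w \<Rightarrow> 'a::euclidean_space \<Rightarrow> real"
  assumes "sigma_finite_measure M" and Z: "(\<lambda>(\<omega>, x). Z \<omega> x) \<in> borel_measurable (M \<Otimes>\<^sub>M borel)"
  shows "(\<lambda>x. \<integral>\<omega>. exp (\<gamma> * Z \<omega> x) \<partial>M) \<in> borel_measurable borel"
proof -
  interpret sigma_finite_measure M by fact
  have [measurable]: "(\<lambda>p. Z (snd p) (fst p)) \<in> borel_measurable (borel \<Otimes>\<^sub>M M)"
    using measurable_pair_swap[OF Z] by (simp add: case_prod_beta')
  show ?thesis
    by measurable
qed

lemma borel_measurable_gmc: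
  assumes prob: "prob_space (M N)" and X: "(\<lambda>(\<omega>, x). X N \<omega> x) \<in> borel_measurable (M N \<Otimes>\<^sub>M borel)"
    and [measurable]: "A \<in> sets borel"
  shows "gmc M X N \<gamma> A \<in> borel_measurable (M N)"
proof -
  have [measurable]: "(\<lambda>p. X N (fst p) (snd p)) \<in> borel_measurable (M N \<Otimes>\<^sub>M borel)"
    using X by (simp add: case_prod_beta')
  have [measurable]: "(\<lambda>x. \<integral>\<omega>'. exp (\<gamma> * X N \<omega>' x) \<partial>M N) \<in> borel_measurable borel"
    by (rule borel_measurable_exp_moment[OF prob_space_imp_sigma_finite[OF prob] X])
  have sets_eq: "sets (M N \<Otimes>\<^sub>M borel) = sets (M N \<Otimes>\<^sub>M lborel)"
    by (rule sets_pair_measure_cong) simp_all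
  have "(\<lambda>(\<omega>, x). indicator A x *\<^sub>R (exp (\<gamma> * X N \<omega> x) /
      (\<integral>\<omega>'. exp (\<gamma> * X N \<omega>' x) \<partial>M N))) \<in> borel_measurable (M N \<Otimes>\<^sub>M borel)"
    by measurable
  then have "(\<lambda>(\<omega>, x). indicator A x *\<^sub>R (exp (\<gamma> * X N \<omega> x) /
      (\<integral>\<omega>'. exp (\<gamma> * X N \<omega>' x) \<partial>M N))) \<in> borel_measurable (M N \<Otimes>\<^sub>M lborel)"
    unfolding measurable_cong_sets[OF sets_eq refl] .
  then show ?thesis
    unfolding gmc_def set_lebesgue_integral_def
    by (rule lborel.borel_measurable_lebesgue_integral)
qed

lemma integrable_gmc_integrand:
  fixes X :: "'n \<Rightarrow> 'w \<Rightarrow> 'a::euclidean_space \<Rightarrow> real"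
  assumes prob: "prob_space (M N)" and X: "(\<lambda>(\<omega>, x). X N \<omega> x) \<in> borel_measurable (M N \<Otimes>\<^sub>M borel)"
    and \<omega>: "\<omega> \<in> space (M N)" and A: "A \<in> sets borel" "emeasure lborel A < \<infinity>"
    and \<gamma>: "0 \<le> \<gamma>" and X_le: "\<And>x. x \<in> A \<Longrightarrow> X N \<omega> x \<le> u"
    and D: "0 < l" "\<And>x. x \<in> A \<Longrightarrow> l \<le> (\<integral>\<omega>'. exp (\<gamma> * X N \<omega>' x) \<partial>M N)"
  shows "integrable lborel
    (\<lambda>x. indicator A x *\<^sub>R (exp (\<gamma> * X N \<omega> x) / (\<integral>\<omega>'. exp (\<gamma> * X N \<omega>' x) \<partial>M N)))"
proof (rule integrableI_bounded_set_indicator[OF _ _ A(2)])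
  have "(\<lambda>x. \<integral>\<omega>'. exp (\<gamma> * X N \<omega>' x) \<partial>M N) \<in> borel_measurable borel"
    by (rule borel_measurable_exp_moment[OF prob_space_imp_sigma_finite[OF prob] X])
  moreover have "X N \<omega> \<in> borel_measurable borel"
    using measurable_Pair2[OF X \<omega>] by simp
  ultimately show "(\<lambda>x. exp (\<gamma> * X N \<omega> x) / (\<integral>\<omega>'. exp (\<gamma> * X N \<omega>' x) \<partial>M N)) \<in> borel_measurable lborel"
    by simp
  show "AE x in lborel. x \<in> A \<longrightarrow>
      norm (exp (\<gamma> * X N \<omega> x) / (\<integral>\<omega>'. exp (\<gamma> * X N \<omega>' x) \<partial>M N)) \<le> exp (\<gamma> * u) / l"
    using D X_le \<gamma> by (auto intro!: frac_le mult_left_mono)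
qed (use A in simp)

lemma gmc_le_scaled_gmc:
  assumes prob: "prob_space (M N)" and X: "(\<lambda>(\<omega>, x). X N \<omega> x) \<in> borel_measurable (M N \<Otimes>\<^sub>M borel)"
    and \<omega>: "\<omega> \<in> space (M N)" and A: "A \<in> sets borel" "emeasure lborel A < \<infinity>"
    and \<gamma>: "0 \<le> \<gamma>1" "\<gamma>1 \<le> \<gamma>2" and X_le: "\<And>x. x \<in> A \<Longrightarrow> X N \<omega> x \<le> u"
    and D1: "0 < l" "\<And>x. x \<in> A \<Longrightarrow> l \<le> (\<integral>\<omega>'. exp (\<gamma>1 * X N \<omega>' x) \<partial>M N)"
      "\<And>x. x \<in> A \<Longrightarrow> (\<integral>\<omega>'. exp (\<gamma>1 * X N \<omega>' x) \<partial>M N) \<le> h"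
    and D2: "0 < c" "\<And>x. x \<in> A \<Longrightarrow> c \<le> (\<integral>\<omega>'. exp (\<gamma>2 * X N \<omega>' x) \<partial>M N)"
  shows "gmc M X N \<gamma>2 A \<omega> \<le> h / c * exp ((\<gamma>2 - \<gamma>1) * u) * gmc M X N \<gamma>1 A \<omega>"
proof -
  define D where "D \<gamma> x = (\<integral>\<omega>'. exp (\<gamma> * X N \<omega>' x) \<partial>M N)" for \<gamma> x
  define K where "K = h / c * exp ((\<gamma>2 - \<gamma>1) * u)"
  have D1_pos: "0 < D \<gamma>1 x" if "x \<in> A" for x
    using D1(1) D1(2)[OF that] unfolding D_def by linarith
  have pointwise: "indicator A x *\<^sub>R (exp (\<gamma>2 * X N \<omega> x) / D \<gamma>2 x)
      \<le> K * (indicator A x *\<^sub>R (exp (\<gamma>1 * X N \<omega> x) / D \<gamma>1 x))" for x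
  proof (cases "x \<in> A")
    case True
    with D1_pos show ?thesis
      using exp_tilt_ratio_le[OF \<gamma>(2) X_le[OF True] _ D1(3)[OF True] D2(1) D2(2)[OF True]]
      unfolding K_def D_def by simp
  qed simp
  have nonneg: "0 \<le> K * (indicator A x *\<^sub>R (exp (\<gamma>1 * X N \<omega> x) / D \<gamma>1 x))" for x
  proof (cases "x \<in> A")
    case True
    with D1_pos D1(3) have "0 < h"
      unfolding D_def by (meson less_le_trans)
    with D2(1) have "0 \<le> K"
      unfolding K_def by simp
    with True D1_pos[OF True] show ?thesis
      by (intro mult_nonneg_nonneg) (auto intro!: divide_nonneg_pos)
  qed simp
  have "gmc M X N \<gamma>2 A \<omega> = (\<integral>x. indicator A x *\<^sub>R (exp (\<gamma>2 * X N \<omega> x) / D \<gamma>2 x) \<partial>lborel)"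
    unfolding gmc_def D_def set_lebesgue_integral_def ..
  also have "\<dots> \<le> (\<integral>x. K * (indicator A x *\<^sub>R (exp (\<gamma>1 * X N \<omega> x) / D \<gamma>1 x)) \<partial>lborel)"
    using integrable_gmc_integrand[where M=M and X=X and N=N, OF prob X \<omega> A \<gamma>(1) X_le D1(1,2)]
      pointwise nonneg
    unfolding D_def by (intro integral_mono' integrable_mult_right)
  also have "\<dots> = K * gmc M X N \<gamma>1 A \<omega>"
    unfolding gmc_def D_def set_lebesgue_integral_def by (rule integral_mult_right_zero)
  finally show ?thesis
    unfolding K_def .
qed

lemma tilt_constant_eq_powr:
  fixes \<epsilon> a \<gamma>1 \<gamma>2 :: real
  assumes "0 < \<epsilon>"
  shows "\<epsilon> powr (- \<gamma>1\<^sup>2 / 2) / \<epsilon> powr (- \<gamma>2\<^sup>2 / 2) * exp ((\<gamma>2 - \<gamma>1) * (a * ln (1 / \<epsilon>)))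
    = \<epsilon> powr ((\<gamma>2\<^sup>2 - \<gamma>1\<^sup>2) / 2 - (\<gamma>2 - \<gamma>1) * a)"
proof -
  have "exp ((\<gamma>2 - \<gamma>1) * (a * ln (1 / \<epsilon>))) = \<epsilon> powr (- ((\<gamma>2 - \<gamma>1) * a))"
    using assms by (simp add: powr_def ln_div)
  then have "\<epsilon> powr (- \<gamma>1\<^sup>2 / 2) / \<epsilon> powr (- \<gamma>2\<^sup>2 / 2) * exp ((\<gamma>2 - \<gamma>1) * (a * ln (1 / \<epsilon>)))
      = \<epsilon> powr (- \<gamma>1\<^sup>2 / 2 - - \<gamma>2\<^sup>2 / 2 + - ((\<gamma>2 - \<gamma>1) * a))"
    by (simp only: powr_add powr_diff)
  also have "- \<gamma>1\<^sup>2 / 2 - - \<gamma>2\<^sup>2 / 2 + - ((\<gamma>2 - \<gamma>1) * a) = (\<gamma>2\<^sup>2 - \<gamma>1\<^sup>2) / 2 - (\<gamma>2 - \<gamma>1) * a"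
    by (simp add: field_simps)
  finally show ?thesis .
qed

lemma outer_prob_to_zero_le_vanishing_multiple:
  assumes prob: "\<And>N. prob_space (M N)"
    and Y: "\<And>N. Y N \<in> borel_measurable (M N)" and Z: "\<And>N. Z N \<in> borel_measurable (M N)"
    and \<zeta>: "real_distribution \<zeta>" "weak_conv_m (\<lambda>N. distr (M N) borel (Y N)) \<zeta>"
    and \<xi>: "real_distribution \<xi>" "measure \<xi> {0<..} = 1" "weak_conv_m (\<lambda>N. distr (M N) borel (Z N)) \<xi>"
    and K: "K \<longlonglongrightarrow> 0" "\<And>N. 0 \<le> K N"
    and E: "\<And>N. E N \<subseteq> space (M N)" and le: "\<And>N \<omega>. \<omega> \<in> E N \<Longrightarrow> Z N \<omega> \<le> K N * Y N \<omega>"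
  shows "outer_prob_to_zero M E"
proof (rule outer_prob_to_zeroI[OF prob_space.finite_measure[OF prob] E])
  fix \<eta> :: real assume "0 < \<eta>"
  then obtain t where "0 < t"
    and t: "\<forall>\<^sub>F N in sequentially. measure (M N) {\<omega>\<in>space (M N). Z N \<omega> \<le> t} < \<eta> / 2"
    using weak_conv_eventually_prob_le_small[OF prob Z \<xi>(1) \<xi>(3) \<xi>(2), of "\<eta> / 2"] by auto
  obtain s where s: "\<forall>\<^sub>F N in sequentially. measure (M N) {\<omega>\<in>space (M N). s \<le> Y N \<omega>} < \<eta> / 2"
    using weak_conv_eventually_prob_ge_small[OF prob Y \<zeta>, of "\<eta> / 2"] \<open>0 < \<eta>\<close> by auto
  have Ks: "\<forall>\<^sub>F N in sequentially. K N * \<bar>s\<bar> < t"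
    using order_tendstoD(2)[OF tendsto_mult_left_zero[OF K(1)] \<open>0 < t\<close>] .
  define B where "B N = {\<omega>\<in>space (M N). Z N \<omega> \<le> t} \<union> {\<omega>\<in>space (M N). s \<le> Y N \<omega>}" for N
  have "B N \<in> sets (M N)" for N
    unfolding B_def using Y Z by measurable
  moreover have "\<forall>\<^sub>F N in sequentially. E N \<subseteq> B N \<and> measure (M N) (B N) < \<eta>"
    using Ks t s
  proof eventually_elim
    case (elim N)
    have "\<omega> \<in> B N" if "\<omega> \<in> E N" for \<omega>
    proof (cases "s \<le> Y N \<omega>")
      case False
      \<comment> \<open>then \<open>Z N \<omega> \<le> K N * \<bar>s\<bar> < t\<close>\<close>
      then have "K N * Y N \<omega> \<le> K N * \<bar>s\<bar>"
        using K(2) by (intro mult_left_mono) auto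
      then show ?thesis
        using le[OF that] elim(1) E that unfolding B_def by fastforce
    qed (use E that in \<open>auto simp: B_def\<close>)
    moreover have "measure (M N) (B N) < \<eta>"
      using measure_Un_le[of "{\<omega>\<in>space (M N). Z N \<omega> \<le> t}" "M N" "{\<omega>\<in>space (M N). s \<le> Y N \<omega>}"]
        elim(2,3) Y Z unfolding B_def by simp
    ultimately show ?case
      by blast
  qed
  ultimately show "\<exists>B. (\<forall>N. B N \<in> sets (M N)) \<and>
      (\<forall>\<^sub>F N in sequentially. E N \<subseteq> B N \<and> measure (M N) (B N) < \<eta>)"
    by blast
qed

lemma outer_prob_to_zero_field_below_level:
  assumes prob: "\<And>N. prob_space (M N)"
    and X: "\<And>N. (\<lambda>(\<omega>, x). X N \<omega> x) \<in> borel_measurable (M N \<Otimes>\<^sub>M borel)"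
    and \<epsilon>: "\<And>N. 0 < \<epsilon> N" "\<epsilon> \<longlonglongrightarrow> 0"
    and A: "A \<in> sets borel" "emeasure lborel A < \<infinity>"
    and \<gamma>: "0 < \<gamma>1" "\<gamma>1 < \<gamma>2" "a < (\<gamma>1 + \<gamma>2) / 2"
    and D1_upper: "\<And>N x. x \<in> A \<Longrightarrow> (\<integral>\<omega>. exp (\<gamma>1 * X N \<omega> x) \<partial>M N) \<le> R * \<epsilon> N powr (- \<gamma>1\<^sup>2 / 2)"
    and D1_lower: "0 < C1" "\<And>N x. x \<in> A \<Longrightarrow> (\<integral>\<omega>. exp (\<gamma>1 * X N \<omega> x) \<partial>M N) \<ge> (1 / C1) * \<epsilon> N powr (- \<gamma>1\<^sup>2 / 2)"
    and D2_lower: "0 < C2" "\<And>N x. x \<in> A \<Longrightarrow> (\<integral>\<omega>. exp (\<gamma>2 * X N \<omega> x) \<partial>M N) \<ge> (1 / C2) * \<epsilon> N powr (- \<gamma>2\<^sup>2 / 2)"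
    and \<zeta>1: "real_distribution \<zeta>1" "weak_conv_m (\<lambda>N. distr (M N) borel (gmc M X N \<gamma>1 A)) \<zeta>1"
    and \<zeta>2: "real_distribution \<zeta>2" "measure \<zeta>2 {0<..} = 1"
      "weak_conv_m (\<lambda>N. distr (M N) borel (gmc M X N \<gamma>2 A)) \<zeta>2"
  shows "outer_prob_to_zero M (\<lambda>N. {\<omega>\<in>space (M N). \<forall>x\<in>A. X N \<omega> x \<le> a * ln (1 / \<epsilon> N)})"
proof -
  define e where "e = (\<gamma>2\<^sup>2 - \<gamma>1\<^sup>2) / 2 - (\<gamma>2 - \<gamma>1) * a"
  have "e = (\<gamma>2 - \<gamma>1) * ((\<gamma>1 + \<gamma>2) / 2 - a)"
    unfolding e_def by (simp add: power2_eq_square algebra_simps)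
  then have "0 < e"
    using \<gamma> by simp
  define K where "K N = \<bar>R\<bar> * C2 * \<epsilon> N powr e" for N
  have "K \<longlonglongrightarrow> \<bar>R\<bar> * C2 * 0"
    unfolding K_def using \<epsilon> \<open>0 < e\<close>
    by (intro tendsto_mult tendsto_const tendsto_zero_powrI) (auto intro!: always_eventually less_imp_le)
  then have K_lim: "K \<longlonglongrightarrow> 0"
    by simp
  have D1_upper_abs: "(\<integral>\<omega>. exp (\<gamma>1 * X N \<omega> x) \<partial>M N) \<le> \<bar>R\<bar> * \<epsilon> N powr (- \<gamma>1\<^sup>2 / 2)"
    if "x \<in> A" for x N
    using D1_upper[OF that, of N] by (smt (verit) mult_right_mono powr_ge_zero)
  have "gmc M X N \<gamma>2 A \<omega> \<le> K N * gmc M X N \<gamma>1 A \<omega>"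
    if "\<omega> \<in> space (M N)" "\<forall>x\<in>A. X N \<omega> x \<le> a * ln (1 / \<epsilon> N)" for N \<omega>
  proof -
    have "gmc M X N \<gamma>2 A \<omega> \<le> \<bar>R\<bar> * \<epsilon> N powr (- \<gamma>1\<^sup>2 / 2) / ((1 / C2) * \<epsilon> N powr (- \<gamma>2\<^sup>2 / 2))
        * exp ((\<gamma>2 - \<gamma>1) * (a * ln (1 / \<epsilon> N))) * gmc M X N \<gamma>1 A \<omega>"
      using that \<gamma> D1_lower D2_lower \<epsilon>(1)[of N] D1_upper_abs
      by (intro gmc_le_scaled_gmc[where M=M and X=X and N=N and l="(1 / C1) * \<epsilon> N powr (- \<gamma>1\<^sup>2 / 2)",
          OF prob X that(1) A]) auto
    also have "\<dots> = \<bar>R\<bar> * C2 * (\<epsilon> N powr (- \<gamma>1\<^sup>2 / 2) / \<epsilon> N powr (- \<gamma>2\<^sup>2 / 2)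
        * exp ((\<gamma>2 - \<gamma>1) * (a * ln (1 / \<epsilon> N)))) * gmc M X N \<gamma>1 A \<omega>"
      using D2_lower(1) \<epsilon>(1)[of N] by (simp add: field_simps)
    also have "\<dots> = K N * gmc M X N \<gamma>1 A \<omega>"
      unfolding K_def e_def tilt_constant_eq_powr[OF \<epsilon>(1)] ..
    finally show ?thesis .
  qed
  moreover have "0 \<le> K N" for N
    unfolding K_def using D2_lower(1) by simp
  moreover have "gmc M X N \<gamma> A \<in> borel_measurable (M N)" for N \<gamma>
    using borel_measurable_gmc[where M=M and X=X, OF prob X A(1)] .
  ultimately show ?thesis
    by (intro outer_prob_to_zero_le_vanishing_multiple[OF prob _ _ \<zeta>1 \<zeta>2 K_lim]) auto
qed

lemma exists_compact_subset_positive_measure: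
  fixes \<Omega> :: "'a::euclidean_space set"
  assumes "open \<Omega>" "\<Omega> \<noteq> {}"
  shows "\<exists>A. A \<in> sets borel \<and> compact A \<and> A \<subseteq> \<Omega> \<and>
    emeasure lborel A < \<infinity> \<and> emeasure lborel A > 0"
proof -
  obtain c r where "0 < r" "cball c r \<subseteq> \<Omega>"
    using assms open_contains_cball by blast
  moreover have "emeasure lborel (cball c r) < \<infinity>"
    by (rule emeasure_lborel_cball_finite)
  ultimately show ?thesis
    by (intro exI[of _ "cball c r"] conjI) (simp_all add: emeasure_eq_ennreal_measure)
qed

lemma outer_prob_to_zero_field_below_subcritical:
  fixes \<Omega> :: "'a::euclidean_space set"
  assumes \<Omega>: "open \<Omega>" "\<Omega> \<noteq> {}"
    and prob: "\<And>N. prob_space (M N)"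
    and X: "\<And>N. (\<lambda>(\<omega>, x). X N \<omega> x) \<in> borel_measurable (M N \<Otimes>\<^sub>M borel)"
    and \<epsilon>: "\<And>N. 0 < \<epsilon> N" "\<epsilon> \<longlonglongrightarrow> 0"
    and E_upper: "\<And>\<gamma>. \<gamma> > 0 \<Longrightarrow> \<exists>R. \<forall>N. \<forall>x\<in>\<Omega>.
        integrable (M N) (\<lambda>\<omega>. exp (\<gamma> * X N \<omega> x)) \<and>
        (\<integral>\<omega>. exp (\<gamma> * X N \<omega> x) \<partial>M N) \<le> R * \<epsilon> N powr (- \<gamma>\<^sup>2 / 2)"
    and E_lower: "\<And>\<gamma> A. \<gamma> > 0 \<Longrightarrow> compact A \<Longrightarrow> A \<subseteq> \<Omega> \<Longrightarrow> \<exists>C>0. \<forall>N. \<forall>x\<in>A.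
        (\<integral>\<omega>. exp (\<gamma> * X N \<omega> x) \<partial>M N) \<ge> (1 / C) * \<epsilon> N powr (- \<gamma>\<^sup>2 / 2)"
    and M_cond: "\<And>\<gamma> A. 0 < \<gamma> \<Longrightarrow> \<gamma> < sqrt (2 * DIM('a)) \<Longrightarrow> A \<in> sets borel \<Longrightarrow>
        A \<subseteq> \<Omega> \<Longrightarrow> emeasure lborel A > 0 \<Longrightarrow>
        \<exists>\<zeta>::real measure. prob_space \<zeta> \<and> sets \<zeta> = sets borel \<and>
          measure \<zeta> {0<..} = 1 \<and>
          weak_conv_m (\<lambda>N. distr (M N) borel (gmc M X N \<gamma> A)) \<zeta>"
    and a: "a < sqrt (2 * DIM('a))"
  shows "outer_prob_to_zero M (\<lambda>N. {\<omega>\<in>space (M N). \<forall>x\<in>\<Omega>. X N \<omega> x \<le> a * ln (1 / \<epsilon> N)})"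
proof -
  obtain A where A: "A \<in> sets borel" "compact A" "A \<subseteq> \<Omega>"
    "emeasure lborel A < \<infinity>" "emeasure lborel A > 0"
    using exists_compact_subset_positive_measure[OF \<Omega>] by blast
  have "max a 0 < sqrt (2 * DIM('a))"
    using a by simp
  then obtain \<gamma>1 \<gamma>2 where \<gamma>: "max a 0 < \<gamma>1" "\<gamma>1 < \<gamma>2" "\<gamma>2 < sqrt (2 * DIM('a))"
    by (meson dense)
  obtain R where R: "\<And>N x. x \<in> A \<Longrightarrow> (\<integral>\<omega>. exp (\<gamma>1 * X N \<omega> x) \<partial>M N) \<le> R * \<epsilon> N powr (- \<gamma>1\<^sup>2 / 2)"
    using E_upper[of \<gamma>1] \<gamma> A(3) by force
  obtain C1 where "0 < C1"
    and C1: "\<And>N x. x \<in> A \<Longrightarrow> (\<integral>\<omega>. exp (\<gamma>1 * X N \<omega> x) \<partial>M N) \<ge> (1 / C1) * \<epsilon> N powr (- \<gamma>1\<^sup>2 / 2)"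
    using E_lower[of \<gamma>1 A] \<gamma> A(2,3) by force
  obtain C2 where "0 < C2"
    and C2: "\<And>N x. x \<in> A \<Longrightarrow> (\<integral>\<omega>. exp (\<gamma>2 * X N \<omega> x) \<partial>M N) \<ge> (1 / C2) * \<epsilon> N powr (- \<gamma>2\<^sup>2 / 2)"
    using E_lower[of \<gamma>2 A] \<gamma> A(2,3) by force
  have "\<exists>\<zeta>. real_distribution \<zeta> \<and> measure \<zeta> {0<..} = 1 \<and>
      weak_conv_m (\<lambda>N. distr (M N) borel (gmc M X N \<gamma> A)) \<zeta>" if "0 < \<gamma>" "\<gamma> < sqrt (2 * DIM('a))" for \<gamma>
    using M_cond[OF that A(1,3,5)]
    unfolding real_distribution_def real_distribution_axioms_def by auto
  then obtain \<zeta>1 \<zeta>2 where \<zeta>1: "real_distribution \<zeta>1" "weak_conv_m (\<lambda>N. distr (M N) borel (gmc M X N \<gamma>1 A)) \<zeta>1"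
    and \<zeta>2: "real_distribution \<zeta>2" "measure \<zeta>2 {0<..} = 1"
      "weak_conv_m (\<lambda>N. distr (M N) borel (gmc M X N \<gamma>2 A)) \<zeta>2"
    using \<gamma> by (meson max.strict_boundedE order.strict_trans)
  have below_on_A: "outer_prob_to_zero M (\<lambda>N. {\<omega>\<in>space (M N). \<forall>x\<in>A. X N \<omega> x \<le> a * ln (1 / \<epsilon> N)})"
    using \<gamma> by (intro outer_prob_to_zero_field_below_level[OF prob X \<epsilon> A(1,4) _ _ _ R
          \<open>0 < C1\<close> C1 \<open>0 < C2\<close> C2 \<zeta>1 \<zeta>2]) auto
  show ?thesis
    by (intro outer_prob_to_zero_mono[OF prob_space.finite_measure[OF prob] _ below_on_A])
      (use A(3) in \<open>auto intro!: always_eventually\<close>)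
qed

lemma sup_deviation_cases:
  fixes f :: "'a \<Rightarrow> real"
  assumes "S \<noteq> {}" "bdd_above (f ` S)" "0 < L" "\<delta> < \<bar>(SUP x\<in>S. f x) / L - c\<bar>"
  shows "(\<exists>x\<in>S. (c + \<delta>) * L \<le> f x) \<or> (\<forall>x\<in>S. f x \<le> (c - \<delta>) * L)"
proof (cases "(c + \<delta>) * L < (SUP x\<in>S. f x)")
  case True
  then show ?thesis
    using less_cSUP_iff[OF assms(1,2)] less_imp_le by blast
next
  case False
  with assms(3,4) have "(SUP x\<in>S. f x) < (c - \<delta>) * L"
    by (auto simp: abs_if field_simps split: if_splits)
  then show ?thesis
    using cSUP_upper[OF _ assms(2)] by (meson less_imp_le order_trans)
qed

lemma sup_deviation_subset:
  fixes \<Omega> :: "'a set"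
  assumes "\<Omega> \<noteq> {}" and bdd: "\<And>\<omega>. \<omega> \<in> space (M N) \<Longrightarrow> \<exists>B. \<forall>x\<in>\<Omega>. X N \<omega> x \<le> B"
    and "0 < \<epsilon> N" "\<epsilon> N < 1"
  shows "{\<omega>\<in>space (M N). \<bar>(SUP x\<in>\<Omega>. X N \<omega> x) / ln (1 / \<epsilon> N) - c\<bar> > \<delta>}
    \<subseteq> {\<omega>\<in>space (M N). thick_points X \<epsilon> \<Omega> N (c + \<delta>) \<omega> \<noteq> {}}
      \<union> {\<omega>\<in>space (M N). \<forall>x\<in>\<Omega>. X N \<omega> x \<le> (c - \<delta>) * ln (1 / \<epsilon> N)}"
proof
  fix \<omega> assume "\<omega> \<in> {\<omega>\<in>space (M N). \<bar>(SUP x\<in>\<Omega>. X N \<omega> x) / ln (1 / \<epsilon> N) - c\<bar> > \<delta>}"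
  then have \<omega>: "\<omega> \<in> space (M N)" and dev: "\<delta> < \<bar>(SUP x\<in>\<Omega>. X N \<omega> x) / ln (1 / \<epsilon> N) - c\<bar>"
    by auto
  have "bdd_above (X N \<omega> ` \<Omega>)"
    using bdd[OF \<omega>] by (auto intro: bdd_aboveI2)
  moreover have "0 < ln (1 / \<epsilon> N)"
    using assms(3,4) by simp
  ultimately show "\<omega> \<in> {\<omega>\<in>space (M N). thick_points X \<epsilon> \<Omega> N (c + \<delta>) \<omega> \<noteq> {}}
      \<union> {\<omega>\<in>space (M N). \<forall>x\<in>\<Omega>. X N \<omega> x \<le> (c - \<delta>) * ln (1 / \<epsilon> N)}"
    using sup_deviation_cases[OF assms(1) _ _ dev] \<omega> unfolding thick_points_def by auto
qed

theorem corollary3p7: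
  fixes \<Omega> :: "'a::euclidean_space set"
    and M :: "nat \<Rightarrow> 'w measure"
    and X :: "nat \<Rightarrow> 'w \<Rightarrow> 'a \<Rightarrow> real"
    and \<epsilon> :: "nat \<Rightarrow> real"
    and g :: "'a \<Rightarrow> 'a \<Rightarrow> real"
  assumes dom: "open \<Omega>" "bounded \<Omega>" "\<Omega> \<noteq> {}" "simply_connected \<Omega>" "smooth_boundary \<Omega>"
    and prob: "\<And>N. prob_space (M N)"
    and meas: "\<And>N. (\<lambda>(\<omega>, x). X N \<omega> x) \<in> borel_measurable (M N \<Otimes>\<^sub>M borel)"
    and integ: "\<And>N \<omega>. \<omega> \<in> space (M N) \<Longrightarrow> set_integrable lborel \<Omega> (X N \<omega>)"
    and bdd: "\<And>N \<omega>. \<omega> \<in> space (M N) \<Longrightarrow> \<exists>B. \<forall>x\<in>\<Omega>. X N \<omega> x \<le> B"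
    and usc: "\<And>N \<omega>. \<omega> \<in> space (M N) \<Longrightarrow> upper_semicontinuous_on \<Omega> (X N \<omega>)"
    and g_cont: "continuous_on (\<Omega> \<times> \<Omega>) (\<lambda>(x, y). g x y)"
    and g_bdd: "\<exists>B. \<forall>x\<in>\<Omega>. \<forall>y\<in>\<Omega>. g x y \<le> B"
    and g_L2: "set_integrable (lborel \<Otimes>\<^sub>M lborel) (\<Omega> \<times> \<Omega>) (\<lambda>(x, y). (g x y)\<^sup>2)"
    and gauss: "\<And>f. smooth_on f UNIV \<Longrightarrow> compact (closure {x. f x \<noteq> 0}) \<Longrightarrow> closure {x. f x \<noteq> 0} \<subseteq> \<Omega> \<Longrightarrow>
        weak_conv_m (\<lambda>N. distr (M N) borel (\<lambda>\<omega>. LINT x:\<Omega>|lborel. f x * X N \<omega> x))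
          (gaussian_law (LINT x:\<Omega>|lborel. LINT y:\<Omega>|lborel.
              f x * f y * (ln (1 / dist x y) + g x y)))"
    and E_pos: "\<And>N. \<epsilon> N > 0"
    and E_lim: "\<epsilon> \<longlonglongrightarrow> 0"
    and E_upper: "\<And>\<gamma>. \<gamma> > 0 \<Longrightarrow> \<exists>R. \<forall>N. \<forall>x\<in>\<Omega>.
        integrable (M N) (\<lambda>\<omega>. exp (\<gamma> * X N \<omega> x)) \<and>
        (\<integral>\<omega>. exp (\<gamma> * X N \<omega> x) \<partial>M N) \<le> R * \<epsilon> N powr (- \<gamma>\<^sup>2 / 2)"
    and E_lower: "\<And>\<gamma> A. \<gamma> > 0 \<Longrightarrow> compact A \<Longrightarrow> A \<subseteq> \<Omega> \<Longrightarrow> \<exists>C>0. \<forall>N. \<forall>x\<in>A.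
        (\<integral>\<omega>. exp (\<gamma> * X N \<omega> x) \<partial>M N) \<ge> (1 / C) * \<epsilon> N powr (- \<gamma>\<^sup>2 / 2)"
    and M_cond: "\<And>\<gamma> A. 0 < \<gamma> \<Longrightarrow> \<gamma> < sqrt (2 * DIM('a)) \<Longrightarrow> A \<in> sets borel \<Longrightarrow>
        A \<subseteq> \<Omega> \<Longrightarrow> emeasure lborel A > 0 \<Longrightarrow>
        \<exists>\<zeta>::real measure. prob_space \<zeta> \<and> sets \<zeta> = sets borel \<and>
          measure \<zeta> {0<..} = 1 \<and>
          weak_conv_m (\<lambda>N. distr (M N) borel (gmc M X N \<gamma> A)) \<zeta>"
    and T_cond: "\<And>\<alpha>. \<alpha> > sqrt (2 * DIM('a)) \<Longrightarrow>
        outer_prob_to_zero M (\<lambda>N. {\<omega>\<in>space (M N). thick_points X \<epsilon> \<Omega> N \<alpha> \<omega> \<noteq> {}})"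
  shows "\<forall>\<delta>>0. outer_prob_to_zero M (\<lambda>N. {\<omega>\<in>space (M N).
            \<bar>(SUP x\<in>\<Omega>. X N \<omega> x) / ln (1 / \<epsilon> N) - sqrt (2 * DIM('a))\<bar> > \<delta>})"
proof (intro allI impI)
  fix \<delta> :: real assume "0 < \<delta>"
  let ?\<gamma> = "sqrt (2 * DIM('a))"
  have thick: "outer_prob_to_zero M (\<lambda>N. {\<omega>\<in>space (M N). thick_points X \<epsilon> \<Omega> N (?\<gamma> + \<delta>) \<omega> \<noteq> {}})"
    using \<open>0 < \<delta>\<close> by (intro T_cond) simp
  have subcritical: "?\<gamma> - \<delta> < ?\<gamma>"
    using \<open>0 < \<delta>\<close> by simp
  have low: "outer_prob_to_zero M
      (\<lambda>N. {\<omega>\<in>space (M N). \<forall>x\<in>\<Omega>. X N \<omega> x \<le> (?\<gamma> - \<delta>) * ln (1 / \<epsilon> N)})"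
    by (rule outer_prob_to_zero_field_below_subcritical[OF dom(1,3) prob meas E_pos E_lim])
      (fact E_upper E_lower M_cond subcritical)+
  have "\<forall>\<^sub>F N in sequentially. \<epsilon> N < 1"
    using E_lim by (rule order_tendstoD) simp
  then have "\<forall>\<^sub>F N in sequentially.
      {\<omega>\<in>space (M N). \<bar>(SUP x\<in>\<Omega>. X N \<omega> x) / ln (1 / \<epsilon> N) - ?\<gamma>\<bar> > \<delta>}
      \<subseteq> {\<omega>\<in>space (M N). thick_points X \<epsilon> \<Omega> N (?\<gamma> + \<delta>) \<omega> \<noteq> {}}
        \<union> {\<omega>\<in>space (M N). \<forall>x\<in>\<Omega>. X N \<omega> x \<le> (?\<gamma> - \<delta>) * ln (1 / \<epsilon> N)}"
    by eventually_elim (rule sup_deviation_subset[OF dom(3) bdd E_pos])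
  then show "outer_prob_to_zero M (\<lambda>N. {\<omega>\<in>space (M N).
      \<bar>(SUP x\<in>\<Omega>. X N \<omega> x) / ln (1 / \<epsilon> N) - ?\<gamma>\<bar> > \<delta>})"
    by (intro outer_prob_to_zero_mono[OF prob_space.finite_measure[OF prob] _
          outer_prob_to_zero_Un[OF thick low]]) auto
qed

end
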